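(* Let $L=L(m,n;k,l)$ be an $L$-shaped supergrid graph with two distinct vertices $s$ and $t$. If $L$ has a Hamiltonian $(s,t)$-path, then none of the following holds: (F1) $s$ or $t$ is a cut vertex of $L$, or $\{s,t\}$ is a vertex cut of $L$; (F4) there is a vertex $w$ of $L$ with $\deg(w)=1$, $w\ne s$, $w\ne t$; (F5) $m-k=1$, $n-l=2$, $l=1$, $k\ge 2$, and $\{s,t\}=\{(1,2),(2,3)\}$ or $\{s,t\}=\{(1,3),(2,2)\}$.
   Context: The infinite supergrid graph has as vertices all points $(x,y)\in\mathbb{Z}^2$, two distinct vertices $u,v$ being adjacent iff $|u_x-v_x|\le 1$ and $|u_y-v_y|\le 1$. For integers $m,n>1$ and $k,l\ge 1$ with $m-k\ge 1$, $n-l\ge 1$, $L(m,n;k,l)$ is the subgraph induced by $\{(x,y):1\le x\le m,\ 1\le y\le n\}\setminus\{(x,y): m-k+1\le x\le m,\ 1\le y\le l\}$ ($(1,1)$ is the upper-left corner, $y$ increases downward). A vertex set $V_1$ is a vertex cut of a connected graph $G$ if $G-V_1$ is disconnected; $v$ is a cut vertex if $\{v\}$ is a vertex cut. A Hamiltonian $(s,t)$-path is a simple path from $s$ to $t$ visiting every vertex exactly once. *)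

theory Defs
  imports Main
begin

type_synonym vert = "int \<times> int"

definition sg_adj :: "vert \<Rightarrow> vert \<Rightarrow> bool" where
  "sg_adj u v \<longleftrightarrow> u \<noteq> v \<and> \<bar>fst u - fst v\<bar> \<le> 1 \<and> \<bar>snd u - snd v\<bar> \<le> 1"

definition Lshape :: "int \<Rightarrow> int \<Rightarrow> int \<Rightarrow> int \<Rightarrow> vert set" where
  "Lshape m n k l =
     {(x, y). 1 \<le> x \<and> x \<le> m \<and> 1 \<le> y \<and> y \<le> n}
     - {(x, y). m - k + 1 \<le> x \<and> x \<le> m \<and> 1 \<le> y \<and> y \<le> l}"

definition walk_in :: "vert set \<Rightarrow> vert list \<Rightarrow> bool" where
  "walk_in V p \<longleftrightarrow> p \<noteq> [] \<and> set p \<subseteq> V \<and>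
     (\<forall>i. Suc i < length p \<longrightarrow> sg_adj (p ! i) (p ! Suc i))"

text \<open>The subgraph induced by V is connected (the empty graph counts as connected).\<close>
definition induced_connected :: "vert set \<Rightarrow> bool" where
  "induced_connected V \<longleftrightarrow>
     (\<forall>u\<in>V. \<forall>v\<in>V. \<exists>p. walk_in V p \<and> hd p = u \<and> last p = v)"

definition vertex_cut :: "vert set \<Rightarrow> vert set \<Rightarrow> bool" where
  "vertex_cut V S \<longleftrightarrow> S \<subseteq> V \<and> \<not> induced_connected (V - S)"

definition cut_vertex :: "vert set \<Rightarrow> vert \<Rightarrow> bool" where
  "cut_vertex V v \<longleftrightarrow> vertex_cut V {v}"

definition sg_degree :: "vert set \<Rightarrow> vert \<Rightarrow> nat" where
  "sg_degree V w = card {u \<in> V. sg_adj w u}"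

definition ham_path :: "vert set \<Rightarrow> vert \<Rightarrow> vert \<Rightarrow> bool" where
  "ham_path V s t \<longleftrightarrow>
     (\<exists>p. walk_in V p \<and> distinct p \<and> set p = V \<and> hd p = s \<and> last p = t)"

end

theory Submission
  imports Defs
begin

(* Deleting one or both endpoints of a Hamiltonian path leaves a subpath, so the rest of the
   graph stays connected (F1), and an interior vertex has two distinct path neighbours, so its
   degree is at least 2 (F4). For (F5) the graph is L(k+1,3;k,1), whose corner (1,1) is adjacent
   only to (1,2) and (2,2); both edges are therefore on the path. With either forbidden pair of
   endpoints, the degree constraints then force every path neighbour of the vertices of the
   first two columns to stay there (up to one case split), so these at most five vertices are
   closed under path adjacency; but a set closed under path adjacency that meets the path
   contains all of it, including (3,2). *)

lemma sg_adj_sym: "sg_adj u v \<Longrightarrow> sg_adj v u"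
  unfolding sg_adj_def by (auto simp: abs_minus_commute)

lemma walk_in_take_drop:
  assumes "walk_in V p" and "take j (drop i p) \<noteq> []"
  shows "walk_in (set (take j (drop i p))) (take j (drop i p))"
  using assms unfolding walk_in_def by auto

lemma walk_in_rev: "walk_in V p \<Longrightarrow> walk_in V (rev p)"
  unfolding walk_in_def
proof (intro conjI allI impI; (elim conjE)?)
  fix i assume adj: "\<forall>i. Suc i < length p \<longrightarrow> sg_adj (p ! i) (p ! Suc i)"
    and i: "Suc i < length (rev p)"
  have "sg_adj (p ! (length p - Suc (Suc i))) (p ! Suc (length p - Suc (Suc i)))"
    using adj i by simp
  moreover have "Suc (length p - Suc (Suc i)) = length p - Suc i" using i by simp
  ultimately show "sg_adj (rev p ! i) (rev p ! Suc i)"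
    using i by (simp add: rev_nth sg_adj_sym)
qed auto

lemma walk_in_induced_connected:
  assumes "walk_in V p"
  shows "induced_connected (set p)"
  unfolding induced_connected_def
proof (intro ballI)
  have segment: "\<exists>q. walk_in (set p) q \<and> hd q = p ! i \<and> last q = p ! j"
    if "i \<le> j" "j < length p" for i j
  proof -
    define q where "q = take (Suc (j - i)) (drop i p)"
    have "q \<noteq> []" and len: "length q = Suc (j - i)" using that by (auto simp: q_def)
    then have "walk_in (set p) q"
      using walk_in_take_drop[OF assms] set_take_subset set_drop_subset
      unfolding q_def walk_in_def by (metis order_trans)
    moreover have "hd q = p ! i" "last q = p ! j"
      using that len by (auto simp: q_def hd_conv_nth last_conv_nth)
    ultimately show ?thesis by blast
  qed
  fix u v assume "u \<in> set p" "v \<in> set p"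
  then obtain i j where ij: "i < length p" "j < length p" "p ! i = u" "p ! j = v"
    by (metis in_set_conv_nth)
  show "\<exists>q. walk_in (set p) q \<and> hd q = u \<and> last q = v"
  proof (cases "i \<le> j")
    case True
    then show ?thesis using segment ij by blast
  next
    case False
    then obtain q where q: "walk_in (set p) q" "hd q = v" "last q = u"
      using segment[of j i] ij by auto
    then have "q \<noteq> []" unfolding walk_in_def by blast
    with q show ?thesis using walk_in_rev[OF q(1)] by (auto simp: hd_rev last_rev)
  qed
qed

lemma induced_connected_take_drop:
  "walk_in V p \<Longrightarrow> induced_connected (set (take j (drop i p)))"
proof (cases "take j (drop i p) = []")
  case True
  show ?thesis unfolding True induced_connected_def by simp
next
  case False
  assume "walk_in V p"
  then show ?thesis using False by (metis walk_in_take_drop walk_in_induced_connected)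
qed

lemma ham_path_minus_ends_connected:
  assumes "ham_path V s t"
  shows "induced_connected (V - {s})" "induced_connected (V - {t})"
    "induced_connected (V - {s, t})"
proof -
  obtain p where p: "walk_in V p" "distinct p" "set p = V" "hd p = s" "last p = t"
    using assms unfolding ham_path_def by blast
  then have "p \<noteq> []" unfolding walk_in_def by blast
  then obtain x q where pq: "p = x # q" by (cases p) auto
  have "V - {s} = set (take (length p) (drop 1 p))"
    using p pq by auto
  then show "induced_connected (V - {s})"
    using induced_connected_take_drop[OF p(1)] by metis
  have "V - {t} = set (take (length p - 1) (drop 0 p))"
    using p pq by (cases q rule: rev_cases) auto
  then show "induced_connected (V - {t})"
    using induced_connected_take_drop[OF p(1)] by metis
  have "V - {s, t} = set (take (length p - 2) (drop 1 p))"
    using p pq by (cases q rule: rev_cases) auto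
  then show "induced_connected (V - {s, t})"
    using induced_connected_take_drop[OF p(1)] by metis
qed

definition path_nbrs :: "'a list \<Rightarrow> 'a \<Rightarrow> 'a set" where
  "path_nbrs p v =
     {u. \<exists>i. Suc i < length p \<and> (p ! i = v \<and> p ! Suc i = u \<or> p ! i = u \<and> p ! Suc i = v)}"

lemma path_nbrs_sym: "u \<in> path_nbrs p v \<longleftrightarrow> v \<in> path_nbrs p u"
  unfolding path_nbrs_def by blast

lemma finite_path_nbrs: "finite (path_nbrs p v)"
proof (rule finite_subset)
  show "path_nbrs p v \<subseteq> set p" unfolding path_nbrs_def by auto
qed simp

lemma path_nbrs_subset_adj:
  assumes "walk_in V p"
  shows "path_nbrs p v \<subseteq> {u \<in> V. sg_adj v u}"
proof
  fix u assume "u \<in> path_nbrs p v"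
  then obtain i where "Suc i < length p" "p ! i = v \<and> p ! Suc i = u \<or> p ! i = u \<and> p ! Suc i = v"
    unfolding path_nbrs_def by blast
  with assms show "u \<in> {u \<in> V. sg_adj v u}"
    unfolding walk_in_def by (auto intro: sg_adj_sym)
qed

lemma path_nbrs_nth:
  assumes "distinct p" "i < length p"
  shows "path_nbrs p (p ! i) = {p ! j |j. j < length p \<and> (j = Suc i \<or> Suc j = i)}"
  using assms unfolding path_nbrs_def by (auto simp: nth_eq_iff_index_eq)

lemma card_path_nbrs_interior:
  assumes "distinct p" "v \<in> set p" "v \<noteq> hd p" "v \<noteq> last p"
  shows "card (path_nbrs p v) = 2"
proof -
  obtain i where i: "i < length p" "p ! i = v" using assms(2) by (metis in_set_conv_nth)
  have "p \<noteq> []" using assms(2) by auto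
  then have "i \<noteq> 0" "i \<noteq> length p - 1"
    using assms(3,4) i by (metis hd_conv_nth, metis last_conv_nth)
  then have "0 < i" "Suc i < length p" using i(1) by auto
  then obtain j where j: "i = Suc j" by (metis gr0_implies_Suc)
  have "path_nbrs p v = {p ! j, p ! Suc i}"
    using path_nbrs_nth[OF assms(1) i(1)] i j \<open>Suc i < length p\<close> by auto
  moreover have "p ! j \<noteq> p ! Suc i"
    using assms(1) j \<open>Suc i < length p\<close> by (simp add: nth_eq_iff_index_eq)
  ultimately show ?thesis by simp
qed

lemma card_path_nbrs_end:
  assumes "distinct p" "p \<noteq> []" "hd p \<noteq> last p" "v \<in> {hd p, last p}"
  shows "card (path_nbrs p v) = 1"
proof -
  have "length p \<noteq> 1"
    using assms(3) by (auto simp: length_Suc_conv)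
  then have "2 \<le> length p" using assms(2) by (cases p) (auto simp: Suc_le_eq)
  show ?thesis
  proof (cases "v = hd p")
    case True
    then have "path_nbrs p v = {p ! 1}"
      using path_nbrs_nth[OF assms(1), of 0] \<open>p \<noteq> []\<close> \<open>2 \<le> length p\<close> by (auto simp: hd_conv_nth)
    then show ?thesis by simp
  next
    case False
    obtain i where len: "length p = Suc (Suc i)"
      using \<open>2 \<le> length p\<close> by (metis add_2_eq_Suc le_Suc_ex)
    then have "v = p ! Suc i" using False assms(4) \<open>p \<noteq> []\<close> by (auto simp: last_conv_nth)
    then have "path_nbrs p v = {p ! i}"
      using path_nbrs_nth[OF assms(1), of "Suc i"] len by auto
    then show ?thesis by simp
  qed
qed

lemma set_subset_if_path_nbrs_closed:
  assumes "v \<in> X" "v \<in> set p" "\<And>u. u \<in> X \<Longrightarrow> path_nbrs p u \<subseteq> X"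
  shows "set p \<subseteq> X"
proof -
  obtain i where i: "i < length p" "p ! i = v" using assms(2) by (metis in_set_conv_nth)
  have step: "p ! j \<in> X \<longleftrightarrow> p ! Suc j \<in> X" if "Suc j < length p" for j
    using assms(3) that unfolding path_nbrs_def by blast
  have up: "p ! (i + d) \<in> X" if "i + d < length p" for d
    using that by (induction d) (use i assms(1) step in auto)
  have down: "p ! (i - d) \<in> X" for d
  proof (induction d)
    case (Suc d)
    then show ?case
      using step[of "i - Suc d"] i by (cases "d < i") (auto simp: Suc_diff_Suc)
  qed (use i assms(1) in auto)
  have "p ! j \<in> X" if "j < length p" for j
    using up[of "j - i"] down[of "i - j"] that by (cases "i \<le> j") auto
  then show ?thesis by (auto simp: in_set_conv_nth)
qed

lemma ham_path_degree_ge_2: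
  assumes "ham_path V s t" "w \<in> V" "w \<noteq> s" "w \<noteq> t"
  shows "2 \<le> sg_degree V w"
proof -
  obtain p where p: "walk_in V p" "distinct p" "set p = V" "hd p = s" "last p = t"
    using assms(1) unfolding ham_path_def by blast
  have "card (path_nbrs p w) = 2"
    using card_path_nbrs_interior[OF p(2)] p assms(2-4) by blast
  moreover have "card (path_nbrs p w) \<le> card {u \<in> V. sg_adj w u}"
    using path_nbrs_subset_adj[OF p(1), of w] p(3) by (intro card_mono) auto
  ultimately show ?thesis unfolding sg_degree_def by simp
qed

locale thin_Lshape_ham_walk =
  fixes k :: int and p :: "vert list"
  assumes k: "k \<ge> 2"
    and walk: "walk_in (Lshape (k + 1) 3 k 1) p"
    and distinct: "distinct p"
    and vertices: "set p = Lshape (k + 1) 3 k 1"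
begin

abbreviation V :: "vert set" where "V \<equiv> Lshape (k + 1) 3 k 1"

lemma mem_V: "(x, y) \<in> V \<longleftrightarrow> 1 \<le> x \<and> x \<le> k + 1 \<and> 1 \<le> y \<and> y \<le> 3 \<and> \<not> (2 \<le> x \<and> y = 1)"
  using k unfolding Lshape_def by auto

lemma in_V: "(1, 1) \<in> V" "(1, 2) \<in> V" "(1, 3) \<in> V" "(2, 2) \<in> V" "(2, 3) \<in> V" "(3, 2) \<in> V"
  using k by (simp_all add: mem_V)

lemma adj_11: "{u \<in> V. sg_adj (1, 1) u} = {(1, 2), (2, 2)}"
proof (intro equalityI subsetI)
  fix u assume "u \<in> {u \<in> V. sg_adj (1, 1) u}"
  then show "u \<in> {(1, 2), (2, 2)}" by (cases u) (auto simp: mem_V sg_adj_def abs_le_iff)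
qed (use k in \<open>auto simp: mem_V sg_adj_def\<close>)

lemma adj_12: "{u \<in> V. sg_adj (1, 2) u} = {(1, 1), (1, 3), (2, 2), (2, 3)}"
proof (intro equalityI subsetI)
  fix u assume "u \<in> {u \<in> V. sg_adj (1, 2) u}"
  then show "u \<in> {(1, 1), (1, 3), (2, 2), (2, 3)}" by (cases u) (auto simp: mem_V sg_adj_def abs_le_iff)
qed (use k in \<open>auto simp: mem_V sg_adj_def\<close>)

lemma adj_13: "{u \<in> V. sg_adj (1, 3) u} = {(1, 2), (2, 2), (2, 3)}"
proof (intro equalityI subsetI)
  fix u assume "u \<in> {u \<in> V. sg_adj (1, 3) u}"
  then show "u \<in> {(1, 2), (2, 2), (2, 3)}" by (cases u) (auto simp: mem_V sg_adj_def abs_le_iff)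
qed (use k in \<open>auto simp: mem_V sg_adj_def\<close>)

lemma card_nbrs_interior: "v \<in> V \<Longrightarrow> v \<notin> {hd p, last p} \<Longrightarrow> card (path_nbrs p v) = 2"
  using card_path_nbrs_interior[OF distinct] vertices by blast

lemma card_nbrs_end:
  "hd p \<noteq> last p \<Longrightarrow> v \<in> {hd p, last p} \<Longrightarrow> card (path_nbrs p v) = 1"
  using card_path_nbrs_end[OF distinct] walk unfolding walk_in_def by blast

lemma nbrs_subset_adj: "path_nbrs p v \<subseteq> {u \<in> V. sg_adj v u}"
  using path_nbrs_subset_adj[OF walk] .

lemma V_subset_if_nbrs_closed:
  assumes "(1, 1) \<in> X" "\<And>u. u \<in> X \<Longrightarrow> path_nbrs p u \<subseteq> X"
  shows "V \<subseteq> X"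
  using set_subset_if_path_nbrs_closed[OF assms(1) _ assms(2)] vertices in_V(1) by blast

lemma nbrs_corner:
  assumes "(1, 1) \<notin> {hd p, last p}"
  shows "path_nbrs p (1, 1) = {(1, 2), (2, 2)}"
  using nbrs_subset_adj[of "(1, 1)"] card_nbrs_interior[OF in_V(1) assms] unfolding adj_11
  by (intro card_seteq) auto

lemma ends_not_12_23: "{hd p, last p} \<noteq> {(1, 2), (2, 3)}"
proof
  assume ends: "{hd p, last p} = {(1, 2), (2, 3)}"
  then have "hd p \<noteq> last p" by (auto simp: doubleton_eq_iff)
  from ends have interior: "(1, 1) \<notin> {hd p, last p}" "(1, 3) \<notin> {hd p, last p}" "(2, 2) \<notin> {hd p, last p}"
    and end_12: "(1, 2) \<in> {hd p, last p}" and end_23: "(2, 3) \<in> {hd p, last p}"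
    by auto
  note nbrs_sym = path_nbrs_sym[of _ p]
  have nbrs_11: "path_nbrs p (1, 1) = {(1, 2), (2, 2)}"
    using nbrs_corner interior(1) .
  have nbrs_12: "path_nbrs p (1, 2) = {(1, 1)}"
    using nbrs_11 nbrs_sym[of "(1, 1)" "(1, 2)"] card_nbrs_end[OF \<open>hd p \<noteq> last p\<close> end_12]
    by (intro card_seteq[symmetric] finite_path_nbrs) auto
  have "path_nbrs p (1, 3) \<subseteq> {(2, 2), (2, 3)}"
    using nbrs_subset_adj[of "(1, 3)"] nbrs_12 nbrs_sym[of "(1, 2)" "(1, 3)"] unfolding adj_13 by auto
  then have nbrs_13: "path_nbrs p (1, 3) = {(2, 2), (2, 3)}"
    using card_nbrs_interior[OF in_V(3) interior(2)] by (intro card_seteq) auto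
  have nbrs_22: "path_nbrs p (2, 2) = {(1, 1), (1, 3)}"
    using nbrs_11 nbrs_13 nbrs_sym[of "(1, 1)" "(2, 2)"] nbrs_sym[of "(1, 3)" "(2, 2)"]
      card_nbrs_interior[OF in_V(4) interior(3)]
    by (intro card_seteq[symmetric] finite_path_nbrs) auto
  have nbrs_23: "path_nbrs p (2, 3) = {(1, 3)}"
    using nbrs_13 nbrs_sym[of "(1, 3)" "(2, 3)"] card_nbrs_end[OF \<open>hd p \<noteq> last p\<close> end_23]
    by (intro card_seteq[symmetric] finite_path_nbrs) auto
  have "V \<subseteq> {(1, 1), (1, 2), (1, 3), (2, 2), (2, 3)}"
    by (rule V_subset_if_nbrs_closed, simp, elim insertE emptyE)
      (simp_all add: nbrs_11 nbrs_12 nbrs_13 nbrs_22 nbrs_23)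
  from subsetD[OF this in_V(6)] show False by simp
qed

lemma ends_not_13_22: "{hd p, last p} \<noteq> {(1, 3), (2, 2)}"
proof
  assume ends: "{hd p, last p} = {(1, 3), (2, 2)}"
  then have "hd p \<noteq> last p" by (auto simp: doubleton_eq_iff)
  from ends have interior: "(1, 1) \<notin> {hd p, last p}" "(1, 2) \<notin> {hd p, last p}" "(2, 3) \<notin> {hd p, last p}"
    and end_13: "(1, 3) \<in> {hd p, last p}" and end_22: "(2, 2) \<in> {hd p, last p}"
    by auto
  note nbrs_sym = path_nbrs_sym[of _ p]
  have nbrs_11: "path_nbrs p (1, 1) = {(1, 2), (2, 2)}"
    using nbrs_corner interior(1) .
  have nbrs_22: "path_nbrs p (2, 2) = {(1, 1)}"
    using nbrs_11 nbrs_sym[of "(1, 1)" "(2, 2)"] card_nbrs_end[OF \<open>hd p \<noteq> last p\<close> end_22]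
    by (intro card_seteq[symmetric] finite_path_nbrs) auto
  have nbrs_12_sub: "path_nbrs p (1, 2) \<subseteq> {(1, 1), (1, 3), (2, 3)}"
    using nbrs_subset_adj[of "(1, 2)"] nbrs_22 nbrs_sym[of "(2, 2)" "(1, 2)"] unfolding adj_12 by auto
  have "(1, 1) \<in> path_nbrs p (1, 2)"
    using nbrs_11 nbrs_sym[of "(1, 1)" "(1, 2)"] by simp
  show False
  proof (cases "(1, 3) \<in> path_nbrs p (1, 2)")
    case True
    then have nbrs_12: "path_nbrs p (1, 2) = {(1, 1), (1, 3)}"
      using \<open>(1, 1) \<in> path_nbrs p (1, 2)\<close> card_nbrs_interior[OF in_V(2) interior(2)]
      by (intro card_seteq[symmetric] finite_path_nbrs) auto
    have nbrs_13: "path_nbrs p (1, 3) = {(1, 2)}"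
      using True nbrs_sym[of "(1, 3)" "(1, 2)"] card_nbrs_end[OF \<open>hd p \<noteq> last p\<close> end_13]
      by (intro card_seteq[symmetric] finite_path_nbrs) auto
    have "V \<subseteq> {(1, 1), (1, 2), (1, 3), (2, 2)}"
      by (rule V_subset_if_nbrs_closed, simp, elim insertE emptyE)
        (simp_all add: nbrs_11 nbrs_12 nbrs_13 nbrs_22)
    from subsetD[OF this in_V(5)] show False by simp
  next
    case False
    then have nbrs_12: "path_nbrs p (1, 2) = {(1, 1), (2, 3)}"
      using nbrs_12_sub card_nbrs_interior[OF in_V(2) interior(2)] by (intro card_seteq) auto
    have "path_nbrs p (1, 3) \<subseteq> {(2, 3)}"
      using nbrs_subset_adj[of "(1, 3)"] False nbrs_sym[of "(1, 2)" "(1, 3)"]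
        nbrs_22 nbrs_sym[of "(2, 2)" "(1, 3)"]
      unfolding adj_13 by auto
    then have nbrs_13: "path_nbrs p (1, 3) = {(2, 3)}"
      using card_nbrs_end[OF \<open>hd p \<noteq> last p\<close> end_13] by (intro card_seteq) auto
    have nbrs_23: "path_nbrs p (2, 3) = {(1, 2), (1, 3)}"
      using nbrs_12 nbrs_13 nbrs_sym[of "(1, 2)" "(2, 3)"] nbrs_sym[of "(1, 3)" "(2, 3)"]
        card_nbrs_interior[OF in_V(5) interior(3)]
      by (intro card_seteq[symmetric] finite_path_nbrs) auto
    have "V \<subseteq> {(1, 1), (1, 2), (1, 3), (2, 2), (2, 3)}"
      by (rule V_subset_if_nbrs_closed, simp, elim insertE emptyE)
        (simp_all add: nbrs_11 nbrs_12 nbrs_13 nbrs_22 nbrs_23)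
    from subsetD[OF this in_V(6)] show False by simp
  qed
qed

end

lemma thin_Lshape_no_ham_path:
  fixes k :: int
  assumes "k \<ge> 2" and "ham_path (Lshape (k + 1) 3 k 1) s t"
  shows "{s, t} \<noteq> {(1, 2), (2, 3)}" and "{s, t} \<noteq> {(1, 3), (2, 2)}"
proof -
  obtain p where p: "walk_in (Lshape (k + 1) 3 k 1) p" "distinct p" "set p = Lshape (k + 1) 3 k 1"
    "hd p = s" "last p = t"
    using assms(2) unfolding ham_path_def by blast
  interpret thin_Lshape_ham_walk k p
    using assms(1) p by unfold_locales
  show "{s, t} \<noteq> {(1, 2), (2, 3)}" "{s, t} \<noteq> {(1, 3), (2, 2)}"
    using ends_not_12_23 ends_not_13_22 p(4,5) by auto
qed

theorem lemma7:
  fixes m n k l :: int and s t :: vert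
  assumes "m > 1" and "n > 1" and "k \<ge> 1" and "l \<ge> 1"
    and "m - k \<ge> 1" and "n - l \<ge> 1"
    and "s \<in> Lshape m n k l" and "t \<in> Lshape m n k l" and "s \<noteq> t"
    and "ham_path (Lshape m n k l) s t"
  shows "\<not> (cut_vertex (Lshape m n k l) s \<or> cut_vertex (Lshape m n k l) t
              \<or> vertex_cut (Lshape m n k l) {s, t})
       \<and> \<not> (\<exists>w \<in> Lshape m n k l. sg_degree (Lshape m n k l) w = 1 \<and> w \<noteq> s \<and> w \<noteq> t)
       \<and> \<not> (m - k = 1 \<and> n - l = 2 \<and> l = 1 \<and> k \<ge> 2 \<and>
              ({s, t} = {(1, 2), (2, 3)} \<or> {s, t} = {(1, 3), (2, 2)}))"
proof (intro conjI notI)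
  show False if "cut_vertex (Lshape m n k l) s \<or> cut_vertex (Lshape m n k l) t
      \<or> vertex_cut (Lshape m n k l) {s, t}"
    using that ham_path_minus_ends_connected[OF assms(10)]
    unfolding cut_vertex_def vertex_cut_def by blast
  show False if "\<exists>w \<in> Lshape m n k l. sg_degree (Lshape m n k l) w = 1 \<and> w \<noteq> s \<and> w \<noteq> t"
    using that ham_path_degree_ge_2[OF assms(10)] by fastforce
  show False if "m - k = 1 \<and> n - l = 2 \<and> l = 1 \<and> k \<ge> 2 \<and>
      ({s, t} = {(1, 2), (2, 3)} \<or> {s, t} = {(1, 3), (2, 2)})"
  proof -
    from that have "m = k + 1" "n = 3" "l = 1" by auto
    then have "ham_path (Lshape (k + 1) 3 k 1) s t" using assms(10) by simp
    then show False using that thin_Lshape_no_ham_path[of k s t] by auto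
  qed
qed

end
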